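(* Let $\Omega\in\mathscr A$ be a $1$-admissible set with $\mathfrak m(\Omega)\in(0,+\infty)$ and $\mathscr C_1(\Omega)\neq\emptyset$. If (P.4) and (P.5) hold, then there exist $1$-Cheeger sets of $\Omega$ of maximal $\mathfrak m$-measure among all $1$-Cheeger sets of $\Omega$. If moreover (P.3) holds, then there is a unique (up to $\mathfrak m$-negligible sets) $1$-Cheeger set $E^+$ of maximal measure, and $E\subset E^+$ (i.e. $\mathfrak m(E\setminus E^+)=0$) for every $E\in\mathscr C_1(\Omega)$.
   Context: $(X,\mathscr A,\mathfrak m)$ is a non-negative $\sigma$-finite measure space; for $A,B\in\mathscr A$, "$A\subset B$" means $\mathfrak m(A\setminus B)=0$. $P\colon\mathscr A\to[0,+\infty]$ is a proper functional. (P.3): $P(E\cap F)+P(E\cup F)\le P(E)+P(F)$. (P.4): if $\chi_{E_k}\to\chi_E$ in $L^1(X,\mathfrak m)$ then $P(E)\le\liminf_k P(E_k)$. (P.5): for every $c\ge0$, $\{\chi_E:E\in\mathscr A,\ P(E)\le c\}$ is compact in $L^1(X,\mathfrak m)$. $\Omega$ is $1$-admissible if it contains some $E$ with $0<\mathfrak m(E)<+\infty$, $P(E)<+\infty$; $h_1(\Omega)=\inf\{P(E)/\mathfrak m(E): E\subset\Omega,\ 0<\mathfrak m(E)<+\infty,\ P(E)<+\infty\}$; minimizers are $1$-Cheeger sets, forming $\mathscr C_1(\Omega)$. *)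

theory Defs
  imports "HOL-Analysis.Analysis"
begin

definition proper_functional :: "'a measure \<Rightarrow> ('a set \<Rightarrow> ennreal) \<Rightarrow> bool" where
  "proper_functional M P \<longleftrightarrow> (\<exists>E\<in>sets M. P E < \<infinity>)"

definition chi_L1_conv :: "'a measure \<Rightarrow> (nat \<Rightarrow> 'a set) \<Rightarrow> 'a set \<Rightarrow> bool" where
  "chi_L1_conv M Es E \<longleftrightarrow>
     (\<lambda>k. \<integral>\<^sup>+ x. ennreal \<bar>indicator (Es k) x - indicator E x :: real\<bar> \<partial>M) \<longlonglongrightarrow> 0"

definition P3 :: "'a measure \<Rightarrow> ('a set \<Rightarrow> ennreal) \<Rightarrow> bool" where
  "P3 M P \<longleftrightarrow> (\<forall>E\<in>sets M. \<forall>F\<in>sets M. P (E \<inter> F) + P (E \<union> F) \<le> P E + P F)"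

definition P4 :: "'a measure \<Rightarrow> ('a set \<Rightarrow> ennreal) \<Rightarrow> bool" where
  "P4 M P \<longleftrightarrow> (\<forall>Es E. (\<forall>k. Es k \<in> sets M) \<longrightarrow> E \<in> sets M \<longrightarrow> chi_L1_conv M Es E
      \<longrightarrow> P E \<le> liminf (\<lambda>k. P (Es k)))"

definition P5 :: "'a measure \<Rightarrow> ('a set \<Rightarrow> ennreal) \<Rightarrow> bool" where
  "P5 M P \<longleftrightarrow> (\<forall>c::real. c \<ge> 0 \<longrightarrow> (\<forall>Es. (\<forall>k. Es k \<in> sets M \<and> P (Es k) \<le> ennreal c) \<longrightarrow>
      (\<exists>(r::nat \<Rightarrow> nat) E. strict_mono r \<and> E \<in> sets M \<and> P E \<le> ennreal c \<and> chi_L1_conv M (Es \<circ> r) E)))"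

definition competitors :: "'a measure \<Rightarrow> ('a set \<Rightarrow> ennreal) \<Rightarrow> 'a set \<Rightarrow> 'a set set" where
  "competitors M P \<Omega> = {E \<in> sets M. emeasure M (E - \<Omega>) = 0 \<and> 0 < emeasure M E \<and>
      emeasure M E < \<infinity> \<and> P E < \<infinity>}"

definition one_admissible :: "'a measure \<Rightarrow> ('a set \<Rightarrow> ennreal) \<Rightarrow> 'a set \<Rightarrow> bool" where
  "one_admissible M P \<Omega> \<longleftrightarrow> (\<exists>E\<in>sets M. emeasure M (E - \<Omega>) = 0 \<and> 0 < emeasure M E \<and> emeasure M E < \<infinity> \<and> P E < \<infinity>)"

definition h1 :: "'a measure \<Rightarrow> ('a set \<Rightarrow> ennreal) \<Rightarrow> 'a set \<Rightarrow> ennreal" where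
  "h1 M P \<Omega> = (INF E\<in>competitors M P \<Omega>. P E / emeasure M E)"

definition cheeger1 :: "'a measure \<Rightarrow> ('a set \<Rightarrow> ennreal) \<Rightarrow> 'a set \<Rightarrow> 'a set set" where
  "cheeger1 M P \<Omega> = {E \<in> competitors M P \<Omega>. P E / emeasure M E = h1 M P \<Omega>}"

end

theory Submission
  imports Defs
begin

text \<open>
  On a Cheeger set the quotient P(E)/m(E) equals h, so P(E) = h m(E) and the perimeter of
  Cheeger sets is controlled by their measure, which is bounded by m(\<Omega>). A maximising sequence
  for the measure therefore has bounded perimeter; (P.5) extracts an L1-limit, which has the limit
  measure and, by (P.4), perimeter at most h times it, hence is a Cheeger set of maximal measure.
  Under (P.3) the union of two Cheeger sets is again a Cheeger set: submodularity of P together with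
  additivity of m forces E \<union> F to realise h as well. Applied to a Cheeger set of maximal
  measure this gives the inclusion of every Cheeger set into it, and hence uniqueness.
\<close>

lemma cheeger1_perimeter_eq:
  assumes "E \<in> cheeger1 M P \<Omega>"
  shows "P E = h1 M P \<Omega> * emeasure M E"
proof -
  from assms have E: "E \<in> competitors M P \<Omega>" and h: "P E / emeasure M E = h1 M P \<Omega>"
    by (auto simp: cheeger1_def)
  from E have "emeasure M E \<noteq> 0" "emeasure M E < \<infinity>" by (auto simp: competitors_def)
  then have "P E = P E / emeasure M E * emeasure M E" by (simp add: ennreal_divide_times)
  with h show ?thesis by simp
qed

lemma h1_mult_le_perimeter:
  assumes "E \<in> sets M" "emeasure M (E - \<Omega>) = 0" "emeasure M E < \<infinity>" "P E < \<infinity>"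
  shows "h1 M P \<Omega> * emeasure M E \<le> P E"
proof (cases "emeasure M E = 0")
  case False
  then have "E \<in> competitors M P \<Omega>" using assms by (simp add: competitors_def zero_less_iff_neq_zero)
  then have "h1 M P \<Omega> \<le> P E / emeasure M E" unfolding h1_def by (rule INF_lower)
  then have "h1 M P \<Omega> * emeasure M E \<le> P E / emeasure M E * emeasure M E"
    by (rule mult_right_mono) simp
  with False assms(3) show ?thesis by (simp add: ennreal_divide_times)
qed simp

lemma cheeger1_if_perimeter_le:
  assumes "E \<in> competitors M P \<Omega>" "P E \<le> h1 M P \<Omega> * emeasure M E"
  shows "E \<in> cheeger1 M P \<Omega>"
proof -
  have lower: "h1 M P \<Omega> \<le> P E / emeasure M E" unfolding h1_def using assms by (intro INF_lower)
  from assms have "emeasure M E \<noteq> 0" "emeasure M E \<noteq> \<infinity>" by (auto simp: competitors_def)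
  moreover have "P E / emeasure M E \<le> h1 M P \<Omega> * emeasure M E / emeasure M E"
    using assms(2) by (rule divide_right_mono_ennreal)
  ultimately have "P E / emeasure M E \<le> h1 M P \<Omega>" by (simp add: ennreal_mult_divide_eq)
  with lower assms show ?thesis by (auto simp: cheeger1_def)
qed

lemma h1_finite_if_cheeger1:
  assumes "E \<in> cheeger1 M P \<Omega>"
  shows "h1 M P \<Omega> \<noteq> \<infinity>"
  using assms by (auto simp: cheeger1_def competitors_def ennreal_divide_eq_top_iff)

lemma emeasure_le_add_emeasure_Diff:
  assumes "A \<in> sets M" "B \<in> sets M"
  shows "emeasure M A \<le> emeasure M B + emeasure M (A - B)"
proof -
  have "emeasure M A \<le> emeasure M (B \<union> (A - B))" using assms by (intro emeasure_mono) auto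
  also have "\<dots> \<le> emeasure M B + emeasure M (A - B)" using assms by (intro emeasure_subadditive) auto
  finally show ?thesis .
qed

lemma competitors_emeasure_le:
  assumes "E \<in> competitors M P \<Omega>" "\<Omega> \<in> sets M"
  shows "emeasure M E \<le> emeasure M \<Omega>"
  using emeasure_le_add_emeasure_Diff[of E M \<Omega>] assms by (auto simp: competitors_def)

lemma emeasure_Diff_le_L1_dist:
  assumes "A \<in> sets M" "B \<in> sets M"
  shows "emeasure M (A - B) \<le> (\<integral>\<^sup>+ x. ennreal \<bar>indicator A x - indicator B x :: real\<bar> \<partial>M)"
    and "emeasure M (A - B) \<le> (\<integral>\<^sup>+ x. ennreal \<bar>indicator B x - indicator A x :: real\<bar> \<partial>M)"
proof -
  have "emeasure M (A - B) = (\<integral>\<^sup>+ x. indicator (A - B) x \<partial>M)" using assms by simp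
  also have "\<dots> \<le> (\<integral>\<^sup>+ x. ennreal \<bar>indicator A x - indicator B x :: real\<bar> \<partial>M)"
    by (intro nn_integral_mono) (auto simp: indicator_def)
  finally show "emeasure M (A - B) \<le> (\<integral>\<^sup>+ x. ennreal \<bar>indicator A x - indicator B x :: real\<bar> \<partial>M)" .
  then show "emeasure M (A - B) \<le> (\<integral>\<^sup>+ x. ennreal \<bar>indicator B x - indicator A x :: real\<bar> \<partial>M)"
    by (simp add: abs_minus_commute)
qed

lemma emeasure_eq_lim_if_chi_L1_conv:
  assumes conv: "chi_L1_conv M Es E" and E: "E \<in> sets M" and Es: "\<And>k. Es k \<in> sets M"
    and lim: "(\<lambda>k. emeasure M (Es k)) \<longlonglongrightarrow> S"
  shows "emeasure M E = S"
proof -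
  define d where "d k = (\<integral>\<^sup>+ x. ennreal \<bar>indicator (Es k) x - indicator E x :: real\<bar> \<partial>M)" for k
  have d: "d \<longlonglongrightarrow> 0" using conv unfolding chi_L1_conv_def d_def .
  have upper: "emeasure M E \<le> emeasure M (Es k) + d k" for k
    using emeasure_le_add_emeasure_Diff[OF E Es] emeasure_Diff_le_L1_dist(2)[OF E Es]
    unfolding d_def by (meson add_left_mono order_trans)
  have lower: "emeasure M (Es k) \<le> emeasure M E + d k" for k
    using emeasure_le_add_emeasure_Diff[OF Es E] emeasure_Diff_le_L1_dist(1)[OF Es E]
    unfolding d_def by (meson add_left_mono order_trans)
  have "emeasure M E \<le> S"
    using LIMSEQ_le_const[OF tendsto_add[OF lim d]] upper by auto
  moreover have "S \<le> emeasure M E"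
    using LIMSEQ_le[OF lim tendsto_add[OF tendsto_const d]] lower by auto
  ultimately show ?thesis by simp
qed

lemma emeasure_Diff_null_if_chi_L1_conv:
  assumes conv: "chi_L1_conv M Es E" and E: "E \<in> sets M" and Es: "\<And>k. Es k \<in> sets M"
    and A: "A \<in> sets M" and null: "\<And>k. emeasure M (Es k - A) = 0"
  shows "emeasure M (E - A) = 0"
proof -
  define d where "d k = (\<integral>\<^sup>+ x. ennreal \<bar>indicator (Es k) x - indicator E x :: real\<bar> \<partial>M)" for k
  have "emeasure M (E - A) \<le> d k" for k
  proof -
    have "emeasure M (E - A) \<le> emeasure M ((E - Es k) \<union> (Es k - A))"
      using Es E A by (intro emeasure_mono) auto
    also have "\<dots> \<le> emeasure M (E - Es k) + emeasure M (Es k - A)"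
      using Es E A by (intro emeasure_subadditive) auto
    also have "\<dots> \<le> d k" unfolding d_def using emeasure_Diff_le_L1_dist(2)[OF E Es] null by simp
    finally show ?thesis .
  qed
  moreover have "d \<longlonglongrightarrow> 0" using conv unfolding chi_L1_conv_def d_def .
  ultimately have "emeasure M (E - A) \<le> 0" using LIMSEQ_le_const by blast
  then show ?thesis by simp
qed

lemma cheeger1_L1_limit:
  assumes P4: "P4 M P" and \<Omega>: "\<Omega> \<in> sets M" and Es: "\<And>k. Es k \<in> cheeger1 M P \<Omega>"
    and E: "E \<in> sets M" and conv: "chi_L1_conv M Es E"
    and lim: "(\<lambda>k. emeasure M (Es k)) \<longlonglongrightarrow> S" and S: "0 < S" "S < \<infinity>"
  shows "E \<in> cheeger1 M P \<Omega>"
proof -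
  let ?h = "h1 M P \<Omega>"
  have Es_sets: "Es k \<in> sets M" for k using Es by (auto simp: cheeger1_def competitors_def)
  have mE: "emeasure M E = S" by (rule emeasure_eq_lim_if_chi_L1_conv[OF conv E Es_sets lim])
  have null: "emeasure M (E - \<Omega>) = 0"
    using Es by (intro emeasure_Diff_null_if_chi_L1_conv[OF conv E Es_sets \<Omega>])
      (auto simp: cheeger1_def competitors_def)
  have "(\<lambda>k. ?h * emeasure M (Es k)) \<longlonglongrightarrow> ?h * S"
    using S h1_finite_if_cheeger1[OF Es] by (intro tendsto_mult_ennreal tendsto_const lim) auto
  then have "(\<lambda>k. P (Es k)) \<longlonglongrightarrow> ?h * S" using cheeger1_perimeter_eq[OF Es] by simp
  moreover have "P E \<le> liminf (\<lambda>k. P (Es k))" using P4 Es_sets E conv by (auto simp: P4_def)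
  ultimately have PE: "P E \<le> ?h * emeasure M E" using mE by (simp add: lim_imp_Liminf)
  also have "\<dots> < \<infinity>" using mE S h1_finite_if_cheeger1[OF Es] by (simp add: ennreal_mult_less_top top.not_eq_extremum)
  finally have "E \<in> competitors M P \<Omega>" using E null mE S by (auto simp: competitors_def)
  then show ?thesis using PE by (rule cheeger1_if_perimeter_le)
qed

lemma cheeger1_max_emeasure_exists:
  assumes P4: "P4 M P" and P5: "P5 M P" and \<Omega>: "\<Omega> \<in> sets M" "emeasure M \<Omega> < \<infinity>"
    and nonempty: "cheeger1 M P \<Omega> \<noteq> {}"
  shows "\<exists>E\<in>cheeger1 M P \<Omega>. \<forall>F\<in>cheeger1 M P \<Omega>. emeasure M F \<le> emeasure M E"
proof -
  let ?C = "cheeger1 M P \<Omega>" and ?h = "h1 M P \<Omega>"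
  have C_sets: "E \<in> sets M" if "E \<in> ?C" for E using that by (auto simp: cheeger1_def competitors_def)
  have C_le_\<Omega>: "emeasure M E \<le> emeasure M \<Omega>" if "E \<in> ?C" for E
    using that \<Omega>(1) competitors_emeasure_le by (auto simp: cheeger1_def)
  define S where "S = (SUP E\<in>?C. emeasure M E)"
  obtain f where f: "incseq f" "range f \<subseteq> emeasure M ` ?C" "S = (SUP i. f i)"
    using ennreal_Sup_countable_SUP[of "emeasure M ` ?C"] nonempty unfolding S_def by auto
  have "\<forall>k. \<exists>E. E \<in> ?C \<and> f k = emeasure M E" using f(2) by blast
  then obtain Es where Es: "\<And>k. Es k \<in> ?C" and f_Es: "f = (\<lambda>k. emeasure M (Es k))" by metis
  have lim: "(\<lambda>k. emeasure M (Es k)) \<longlonglongrightarrow> S" using f LIMSEQ_SUP f_Es by simp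
  obtain E0 where E0: "E0 \<in> ?C" using nonempty by blast
  have "0 < emeasure M E0" using E0 by (simp add: cheeger1_def competitors_def)
  also have "emeasure M E0 \<le> S" unfolding S_def using E0 by (rule SUP_upper)
  finally have S_pos: "0 < S" .
  have "S \<le> emeasure M \<Omega>" unfolding S_def using C_le_\<Omega> by (rule SUP_least)
  then have S_fin: "S < \<infinity>" using \<Omega>(2) by simp
  define c where "c = enn2real (?h * emeasure M \<Omega>)"
  have "?h * emeasure M \<Omega> < \<infinity>"
    using h1_finite_if_cheeger1[OF E0] \<Omega>(2) by (simp add: ennreal_mult_less_top top.not_eq_extremum)
  then have c: "ennreal c = ?h * emeasure M \<Omega>" unfolding c_def by simp
  have "Es k \<in> sets M \<and> P (Es k) \<le> ennreal c" for k
  proof -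
    have "P (Es k) = ?h * emeasure M (Es k)" using cheeger1_perimeter_eq[OF Es] .
    also have "\<dots> \<le> ?h * emeasure M \<Omega>" using C_le_\<Omega>[OF Es] by (rule mult_left_mono) simp
    finally show ?thesis using c C_sets[OF Es] by simp
  qed
  moreover have "c \<ge> 0" unfolding c_def by simp
  ultimately obtain r E where r: "strict_mono r" and E: "E \<in> sets M" "chi_L1_conv M (Es \<circ> r) E"
    using P5 unfolding P5_def by blast
  have lim_r: "(\<lambda>k. emeasure M ((Es \<circ> r) k)) \<longlonglongrightarrow> S"
    using LIMSEQ_subseq_LIMSEQ[OF lim r] by (simp add: o_def)
  have "E \<in> ?C" using Es by (intro cheeger1_L1_limit[OF P4 \<Omega>(1) _ E lim_r S_pos S_fin]) simp
  moreover have "emeasure M E = S"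
    using C_sets[OF Es] by (intro emeasure_eq_lim_if_chi_L1_conv[OF E(2) E(1) _ lim_r]) simp
  moreover have "emeasure M F \<le> S" if "F \<in> ?C" for F unfolding S_def using that by (rule SUP_upper)
  ultimately show ?thesis by auto
qed

lemma cheeger1_Un:
  assumes P3: "P3 M P" and \<Omega>: "\<Omega> \<in> sets M"
    and E: "E \<in> cheeger1 M P \<Omega>" and F: "F \<in> cheeger1 M P \<Omega>"
  shows "E \<union> F \<in> cheeger1 M P \<Omega>"
proof -
  let ?h = "h1 M P \<Omega>" and ?m = "emeasure M"
  have Ec: "E \<in> competitors M P \<Omega>" and Fc: "F \<in> competitors M P \<Omega>"
    using E F by (auto simp: cheeger1_def)
  have sets: "E \<in> sets M" "F \<in> sets M" using Ec Fc by (auto simp: competitors_def)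
  have submod: "P (E \<inter> F) + P (E \<union> F) \<le> P E + P F" using P3 sets by (auto simp: P3_def)
  also have "\<dots> < \<infinity>" using Ec Fc by (simp add: competitors_def)
  finally have P_fin: "P (E \<inter> F) < \<infinity>" "P (E \<union> F) < \<infinity>" by simp_all
  have "?m ((E \<union> F) - \<Omega>) \<le> ?m (E - \<Omega>) + ?m (F - \<Omega>)"
    using sets \<Omega> by (subst Un_Diff) (intro emeasure_subadditive; auto)
  then have null_Un: "?m ((E \<union> F) - \<Omega>) = 0" using Ec Fc by (simp add: competitors_def)
  have null_Int: "?m ((E \<inter> F) - \<Omega>) = 0"
    using Ec sets \<Omega> emeasure_mono[of "(E \<inter> F) - \<Omega>" "E - \<Omega>" M] by (auto simp: competitors_def)
  have "?m (E \<union> F) \<le> ?m E + ?m F" using sets by (rule emeasure_subadditive)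
  then have fin_Un: "?m (E \<union> F) < \<infinity>" using Ec Fc by (auto simp: competitors_def intro: le_less_trans)
  have fin_Int: "?m (E \<inter> F) < \<infinity>"
    using Ec sets emeasure_mono[of "E \<inter> F" E M] by (auto simp: competitors_def intro: le_less_trans)
  have "0 < ?m E" "?m E \<le> ?m (E \<union> F)" using Ec sets by (auto simp: competitors_def intro: emeasure_mono)
  then have Un: "E \<union> F \<in> competitors M P \<Omega>"
    using sets null_Un fin_Un P_fin by (auto simp: competitors_def)
  have Int: "?h * ?m (E \<inter> F) \<le> P (E \<inter> F)"
    using sets null_Int fin_Int P_fin by (intro h1_mult_le_perimeter) auto
  have "?h * ?m (E \<inter> F) + P (E \<union> F) \<le> P (E \<inter> F) + P (E \<union> F)"
    using Int by (rule add_right_mono)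
  also note submod
  also have "P E + P F = ?h * (?m E + ?m F)"
    by (simp add: cheeger1_perimeter_eq[OF E] cheeger1_perimeter_eq[OF F] distrib_left)
  also have "\<dots> = ?h * ?m (E \<inter> F) + ?h * ?m (E \<union> F)"
    using emeasure_Un_Int[OF sets] by (simp add: distrib_left add.commute)
  finally have "P (E \<union> F) \<le> ?h * ?m (E \<union> F)"
    using Int P_fin by (auto simp: ennreal_add_left_cancel_le top_unique)
  with Un show ?thesis by (rule cheeger1_if_perimeter_le)
qed

lemma cheeger1_Diff_null_if_max:
  assumes P3: "P3 M P" and \<Omega>: "\<Omega> \<in> sets M"
    and Ep: "Ep \<in> cheeger1 M P \<Omega>" and max: "\<And>F. F \<in> cheeger1 M P \<Omega> \<Longrightarrow> emeasure M F \<le> emeasure M Ep"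
    and E: "E \<in> cheeger1 M P \<Omega>"
  shows "emeasure M (E - Ep) = 0"
proof -
  have sets: "E \<in> sets M" "Ep \<in> sets M" using E Ep by (auto simp: cheeger1_def competitors_def)
  have "emeasure M Ep + emeasure M (E - Ep) = emeasure M (E \<union> Ep)"
    using emeasure_Un[OF sets(2,1)] by (simp add: Un_commute)
  also have "\<dots> \<le> emeasure M Ep + 0" using max[OF cheeger1_Un[OF P3 \<Omega> E Ep]] by simp
  finally show ?thesis
    using Ep by (auto simp: ennreal_add_left_cancel_le cheeger1_def competitors_def)
qed

theorem proposition3p13:
  fixes M :: "'a measure" and P :: "'a set \<Rightarrow> ennreal" and \<Omega> :: "'a set"
  assumes "sigma_finite_measure M"
    and "proper_functional M P"
    and "\<Omega> \<in> sets M"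
    and "one_admissible M P \<Omega>"
    and "0 < emeasure M \<Omega>" and "emeasure M \<Omega> < \<infinity>"
    and "cheeger1 M P \<Omega> \<noteq> {}"
    and "P4 M P" and "P5 M P"
  shows "(\<exists>E\<in>cheeger1 M P \<Omega>. \<forall>F\<in>cheeger1 M P \<Omega>. emeasure M F \<le> emeasure M E)
    \<and> (P3 M P \<longrightarrow>
        (\<exists>Ep\<in>cheeger1 M P \<Omega>. (\<forall>F\<in>cheeger1 M P \<Omega>. emeasure M F \<le> emeasure M Ep)
          \<and> (\<forall>F\<in>cheeger1 M P \<Omega>. emeasure M F = emeasure M Ep \<longrightarrow>
                emeasure M ((F - Ep) \<union> (Ep - F)) = 0)
          \<and> (\<forall>E\<in>cheeger1 M P \<Omega>. emeasure M (E - Ep) = 0)))"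
proof -
  let ?C = "cheeger1 M P \<Omega>"
  obtain Ep where Ep: "Ep \<in> ?C" and max: "\<And>F. F \<in> ?C \<Longrightarrow> emeasure M F \<le> emeasure M Ep"
    using cheeger1_max_emeasure_exists[OF assms(8,9,3,6,7)] by blast
  have "emeasure M ((F - Ep) \<union> (Ep - F)) = 0"
    if P3: "P3 M P" and F: "F \<in> ?C" "emeasure M F = emeasure M Ep" for F
  proof -
    have "emeasure M (F - Ep) = 0" using cheeger1_Diff_null_if_max[OF P3 assms(3) Ep max F(1)] .
    moreover have "emeasure M (Ep - F) = 0"
      using F max by (intro cheeger1_Diff_null_if_max[OF P3 assms(3) F(1) _ Ep]) simp
    moreover have "F \<in> sets M" "Ep \<in> sets M" using F Ep by (auto simp: cheeger1_def competitors_def)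
    ultimately show ?thesis using emeasure_subadditive[of "F - Ep" M "Ep - F"] by auto
  qed
  then show ?thesis
    using Ep max cheeger1_Diff_null_if_max[OF _ assms(3) Ep max] by blast
qed

end
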